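(* Let $v:\mathbb X\times\mathbb X\to[0,\infty]$ be a measurable symmetric pair potential and $z:\mathbb X\to[0,\infty)$ measurable with $\int_Bz\,d\lambda<\infty$ for all $B\in\mathcal X_{\mathsf b}$; assume $f\le 0$ $\lambda^2$-a.e., and let $a:\mathbb X\to[0,\infty)$ measurable and $t>0$ be such that for $\lambda$-almost all $x_0\in\mathbb X$, $$\sum_{k=1}^\infty\frac{e^{tk}}{k!}\int_{\mathbb X^k}\prod_{j=1}^k|f(x_0,y_j)|\prod_{1\le i<j\le k}\bigl(1+f(y_i,y_j)\bigr)\prod_{j=1}^k z(y_j)e^{a(y_j)}\,d\lambda^k(\mathbf y)\le e^{a(x_0)}-1.$$ Then $K_z$ is a bounded linear operator on the Banach space $E$ with operator norm $\|K_z\|\le e^{-t}<1$.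
   Context: $(\mathbb X,\mathcal X)$ is a complete separable metric space with Borel $\sigma$-algebra, $\mathcal X_{\mathsf b}$ the bounded Borel sets, $\lambda$ a measure finite on bounded sets; $f(x,y)=e^{-v(x,y)}-1$. $E_0$ is the space of sequences $\boldsymbol\rho=(\rho_n)_{n\in\mathbb N}$ of measurable $\rho_n:\mathbb X^n\to\mathbb R$ for which there is $C\ge0$ with $|\rho_n(x_1,\dots,x_n)|\le Ce^{tn}\prod_{1\le i<j\le n}(1+f(x_i,x_j))\prod_{i=1}^nz(x_i)e^{a(x_i)}$ for all $n$ and $\lambda^n$-almost all $\mathbf x$; $\|\boldsymbol\rho\|_0$ is the smallest such $C$, and $E$ is the quotient of $E_0$ by $\{\|\boldsymbol\rho\|_0=0\}$ with the induced norm (a Banach space). The operator $K_z$ is defined by $(K_z\boldsymbol\rho)_1(x_0)=z(x_0)\sum_{k\ge1}\frac1{k!}\int_{\mathbb X^k}\prod_{j=1}^kf(x_0,y_j)\rho_k(y_1,\dots,y_k)\,d\lambda^k(\mathbf y)$ and, for $n\in\mathbb N$, $(K_z\boldsymbol\rho)_{n+1}(x_0,\dots,x_n)=z(x_0)\prod_{i=1}^n(1+f(x_0,x_i))\bigl(\rho_n(x_1,\dots,x_n)+\sum_{k\ge1}\frac1{k!}\int_{\mathbb X^k}\prod_{j=1}^kf(x_0,y_j)\rho_{n+k}(x_1,\dots,x_n,y_1,\dots,y_k)\,d\lambda^k(\mathbf y)\bigr)$. *)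

theory Defs
  imports "HOL-Analysis.Analysis"
begin

definition mayer :: "('a \<Rightarrow> 'a \<Rightarrow> ennreal) \<Rightarrow> 'a \<Rightarrow> 'a \<Rightarrow> real" where
  "mayer v x y = (if v x y = \<infinity> then -1 else exp (- enn2real (v x y)) - 1)"

definition PX :: "'a measure \<Rightarrow> nat \<Rightarrow> (nat \<Rightarrow> 'a) measure" where
  "PX lam n = PiM {..<n} (\<lambda>_. lam)"

definition weight :: "('a \<Rightarrow> 'a \<Rightarrow> ennreal) \<Rightarrow> ('a \<Rightarrow> real) \<Rightarrow> ('a \<Rightarrow> real) \<Rightarrow> real
    \<Rightarrow> nat \<Rightarrow> (nat \<Rightarrow> 'a) \<Rightarrow> real" where
  "weight v z a t n x = exp (t * real n) * (\<Prod>j<n. \<Prod>i<j. 1 + mayer v (x i) (x j))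
     * (\<Prod>i<n. z (x i) * exp (a (x i)))"

text \<open>Sequences rho = (rho_n)_{n>=1}; the entry rho 0 is ignored.\<close>
definition E0 :: "'a measure \<Rightarrow> ('a \<Rightarrow> 'a \<Rightarrow> ennreal) \<Rightarrow> ('a \<Rightarrow> real) \<Rightarrow> ('a \<Rightarrow> real) \<Rightarrow> real
    \<Rightarrow> (nat \<Rightarrow> (nat \<Rightarrow> 'a) \<Rightarrow> real) set" where
  "E0 lam v z a t = {\<rho>. (\<forall>n\<ge>1. \<rho> n \<in> borel_measurable (PX lam n)) \<and>
     (\<exists>C\<ge>0. \<forall>n\<ge>1. AE x in PX lam n. \<bar>\<rho> n x\<bar> \<le> C * weight v z a t n x)}"

definition norm0 :: "'a measure \<Rightarrow> ('a \<Rightarrow> 'a \<Rightarrow> ennreal) \<Rightarrow> ('a \<Rightarrow> real) \<Rightarrow> ('a \<Rightarrow> real) \<Rightarrow> real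
    \<Rightarrow> (nat \<Rightarrow> (nat \<Rightarrow> 'a) \<Rightarrow> real) \<Rightarrow> real" where
  "norm0 lam v z a t \<rho> = Inf {C. 0 \<le> C \<and>
     (\<forall>n\<ge>1. AE x in PX lam n. \<bar>\<rho> n x\<bar> \<le> C * weight v z a t n x)}"

text \<open>Integrand of the k-th term for (K rho)_{n+1}(x_0,...,x_n):
  prod_{j<k} f(x_0,y_j) * rho_{n+k}(x_1,...,x_n,y_1,...,y_k).\<close>
definition Kint :: "('a \<Rightarrow> 'a \<Rightarrow> ennreal) \<Rightarrow> (nat \<Rightarrow> (nat \<Rightarrow> 'a) \<Rightarrow> real) \<Rightarrow> nat
    \<Rightarrow> (nat \<Rightarrow> 'a) \<Rightarrow> nat \<Rightarrow> (nat \<Rightarrow> 'a) \<Rightarrow> real" where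
  "Kint v \<rho> n x k y = (\<Prod>j<k. mayer v (x 0) (y j)) *
     \<rho> (n + k) (\<lambda>i\<in>{..<n + k}. if i < n then x (Suc i) else y (i - n))"

text \<open>The operator K_z; (K rho)_{n+1} at x = (x_0,...,x_n). For n = 0 the term rho_0 is absent.\<close>
definition Kop :: "'a measure \<Rightarrow> ('a \<Rightarrow> 'a \<Rightarrow> ennreal) \<Rightarrow> ('a \<Rightarrow> real)
    \<Rightarrow> (nat \<Rightarrow> (nat \<Rightarrow> 'a) \<Rightarrow> real) \<Rightarrow> nat \<Rightarrow> (nat \<Rightarrow> 'a) \<Rightarrow> real" where
  "Kop lam v z \<rho> m x = (case m of 0 \<Rightarrow> 0 | Suc n \<Rightarrow>
     z (x 0) * (\<Prod>i\<in>{1..n}. 1 + mayer v (x 0) (x i)) *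
     ((if n = 0 then 0 else \<rho> n (\<lambda>i\<in>{..<n}. x (Suc i))) +
      (\<Sum>k. (\<integral>y. Kint v \<rho> n x (Suc k) y \<partial>PX lam (Suc k)) / fact (Suc k))))"

end

theory Submission
  imports Defs
begin

(* Write W_n(x) = e^{tn} prod_{i<j} (1 + f(x_i, x_j)) prod_i z(x_i) e^{a(x_i)} for the weight of the
   norm. Since v >= 0, every factor 1 + f lies in [0, 1], so W is submultiplicative under
   concatenation of tuples: W_{n+k}(x, y) <= W_n(x) W_k(y). Hence if |rho_m| <= C W_m for all m,
   the k-th integral in (K_z rho)_{n+1}(x_0, ..., x_n) is at most C W_n(x_1, ..., x_n) e^{tk} times
   the k-th integral of the Kotecky-Preiss condition at x_0, and that condition sums these bounds
   to C W_n(x_1, ..., x_n) (e^{a(x_0)} - 1). Adding the term rho_n and multiplying by the prefactor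
   z(x_0) prod_i (1 + f(x_0, x_i)) gives exactly e^{-t} C W_{n+1}(x_0, ..., x_n). Thus C -> e^{-t} C
   maps admissible constants for rho to admissible constants for K_z rho, which is the norm bound;
   linearity holds wherever the defining series converge absolutely, i.e. almost everywhere. *)

lemma sigma_finite_if_finite_on_bounded:
  fixes M :: "'a::metric_space measure"
  assumes sets_M: "sets M = sets borel"
    and finite_bounded: "\<And>B. B \<in> sets borel \<Longrightarrow> bounded B \<Longrightarrow> emeasure M B < \<infinity>"
  shows "sigma_finite_measure M"
proof
  let ?A = "range (\<lambda>m::nat. ball undefined (real m) :: 'a set)"
  have "\<Union>?A = UNIV"
    by (auto simp: reals_Archimedean2)
  moreover have "emeasure M (ball c r) \<noteq> \<infinity>" for c :: 'a and r
    using finite_bounded[of "ball c r"] by auto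
  ultimately show "\<exists>A. countable A \<and> A \<subseteq> sets M \<and> \<Union>A = space M \<and> (\<forall>a\<in>A. emeasure M a \<noteq> \<infinity>)"
    using sets_eq_imp_space_eq[OF sets_M] finite_bounded
    by (intro exI[of _ ?A]) (auto simp: sets_M)
qed

lemma prod_lessThan_add: "(\<Prod>i<n + k. F i) = (\<Prod>i<n. F i) * (\<Prod>i<k. F (n + i))"
  for F :: "nat \<Rightarrow> 'b::comm_monoid_mult"
  by (induction k) (simp_all add: mult.assoc)

lemma prod_triangle_lessThan_add:
  fixes h :: "nat \<Rightarrow> nat \<Rightarrow> 'b::comm_monoid_mult"
  shows "(\<Prod>j<n + k. \<Prod>i<j. h i j) =
    (\<Prod>j<n. \<Prod>i<j. h i j) * (\<Prod>j<k. \<Prod>i<n. h i (n + j)) * (\<Prod>j<k. \<Prod>i<j. h (n + i) (n + j))"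
  by (simp add: prod_lessThan_add prod.distrib mult.assoc)

lemma all_less_add_iff: "(\<forall>i<n + k. P i) \<longleftrightarrow> (\<forall>i<n. P i) \<and> (\<forall>i<k. P (n + i))"
  for n k :: nat
  by (metis add_diff_inverse_nat nat_add_left_cancel_less trans_less_add1)

lemma AE_distr_left_inverse:
  assumes f: "f \<in> measurable M N" and g: "g \<in> measurable N M"
    and inverse: "\<And>x. x \<in> space M \<Longrightarrow> g (f x) = x" and P: "AE x in M. P x"
  shows "AE y in distr M N f. P (g y)"
proof -
  obtain A where A: "A \<in> null_sets M" "{x \<in> space M. \<not> P x} \<subseteq> A"
    using P by (auto simp: eventually_ae_filter)
  have "f -` (g -` A \<inter> space N) \<inter> space M = A"
    using A(1)[THEN null_setsD2, THEN sets.sets_into_space] inverse measurable_space[OF f]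
    by force
  then have "g -` A \<inter> space N \<in> null_sets (distr M N f)"
    using A(1) null_setsD2[OF A(1)] measurable_sets[OF g] by (simp add: null_sets_distr_iff[OF f])
  then show ?thesis
    using A(2) inverse measurable_space[OF g] unfolding eventually_ae_filter
    by (intro bexI[of _ "g -` A \<inter> space N"]) auto
qed

lemma (in pair_sigma_finite) AE_pair_measure_fst_snd:
  assumes "AE x in M1. P x" and "AE y in M2. Q y"
  shows "AE p in M1 \<Otimes>\<^sub>M M2. P (fst p) \<and> Q (snd p)"
proof -
  obtain A where A: "A \<in> null_sets M1" "{x \<in> space M1. \<not> P x} \<subseteq> A"
    using assms(1) by (auto simp: eventually_ae_filter)
  obtain B where B: "B \<in> null_sets M2" "{y \<in> space M2. \<not> Q y} \<subseteq> B"
    using assms(2) by (auto simp: eventually_ae_filter)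
  have "A \<times> space M2 \<in> null_sets (M1 \<Otimes>\<^sub>M M2)" "space M1 \<times> B \<in> null_sets (M1 \<Otimes>\<^sub>M M2)"
    using A(1) B(1) by (auto simp: null_sets_def M2.emeasure_pair_measure_Times)
  then have "A \<times> space M2 \<union> space M1 \<times> B \<in> null_sets (M1 \<Otimes>\<^sub>M M2)"
    by (rule null_sets.Un)
  then show ?thesis
    using A(2) B(2) unfolding eventually_ae_filter
    by (intro bexI[of _ "A \<times> space M2 \<union> space M1 \<times> B"]) (auto simp: space_pair_measure)
qed

lemma real_series_of_nn_integral_series_le:
  fixes M :: "nat \<Rightarrow> 'b measure" and g :: "nat \<Rightarrow> 'b \<Rightarrow> real"
  assumes g_meas: "\<And>k. g k \<in> borel_measurable (M k)" and g_nonneg: "\<And>k y. 0 \<le> g k y"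
    and c_pos: "\<And>k. 0 < c k" and B: "0 \<le> B"
    and series: "(\<Sum>k. ennreal (c k) * (\<integral>\<^sup>+y. ennreal (g k y) \<partial>M k)) \<le> ennreal B"
  shows "integrable (M k) (g k)"
    and "summable (\<lambda>k. c k * (\<integral>y. g k y \<partial>M k))"
    and "(\<Sum>k. c k * (\<integral>y. g k y \<partial>M k)) \<le> B"
proof -
  have "(\<integral>\<^sup>+y. ennreal (g k y) \<partial>M k) < \<infinity>" for k
  proof -
    have "ennreal (c k) * (\<integral>\<^sup>+y. ennreal (g k y) \<partial>M k) < \<infinity>"
      by (rule ennreal_suminf_lessD, rule order.strict_trans1[OF series]) simp
    then show ?thesis
      using c_pos[of k] by (auto simp: ennreal_mult_less_top)
  qed
  then show g_int: "integrable (M k) (g k)" for k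
    by (intro integrableI_nonneg g_meas AE_I2 g_nonneg)
  have term_nonneg: "0 \<le> c k * (\<integral>y. g k y \<partial>M k)" for k
    using c_pos[of k] by (simp add: g_nonneg)
  have "ennreal (c k) * (\<integral>\<^sup>+y. ennreal (g k y) \<partial>M k) = ennreal (c k * (\<integral>y. g k y \<partial>M k))" for k
    using g_int c_pos[of k] by (simp add: nn_integral_eq_integral g_nonneg ennreal_mult)
  then have sum_le: "(\<Sum>k. ennreal (c k * (\<integral>y. g k y \<partial>M k))) \<le> ennreal B"
    using series by simp
  show summable: "summable (\<lambda>k. c k * (\<integral>y. g k y \<partial>M k))"
    using sum_le by (intro summable_suminf_not_top term_nonneg) (auto simp: top_unique)
  show "(\<Sum>k. c k * (\<integral>y. g k y \<partial>M k)) \<le> B"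
    using sum_le B by (simp add: suminf_ennreal2[OF term_nonneg summable])
qed

lemma dominated_integral_series:
  fixes M :: "nat \<Rightarrow> 'b measure" and F g :: "nat \<Rightarrow> 'b \<Rightarrow> real"
  assumes F_meas: "\<And>k. F k \<in> borel_measurable (M k)" and g_int: "\<And>k. integrable (M k) (g k)"
    and dominated: "\<And>k. AE y in M k. \<bar>F k y\<bar> \<le> w k * g k y"
    and d_pos: "\<And>k. 0 < d k"
    and summable: "summable (\<lambda>k. w k * (\<integral>y. g k y \<partial>M k) / d k)"
  shows "integrable (M k) (F k)"
    and "summable (\<lambda>k. (\<integral>y. \<bar>F k y\<bar> \<partial>M k) / d k)"
    and "\<bar>\<Sum>k. (\<integral>y. F k y \<partial>M k) / d k\<bar> \<le> (\<Sum>k. w k * (\<integral>y. g k y \<partial>M k) / d k)"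
proof -
  show F_int: "integrable (M k) (F k)" for k
  proof (rule Bochner_Integration.integrable_bound[OF integrable_mult_right[OF g_int] F_meas])
    show "AE y in M k. norm (F k y) \<le> norm (w k * g k y)"
      using dominated[of k] by eventually_elim auto
  qed
  have abs_int_le: "(\<integral>y. \<bar>F k y\<bar> \<partial>M k) / d k \<le> w k * (\<integral>y. g k y \<partial>M k) / d k" for k
  proof -
    have "(\<integral>y. \<bar>F k y\<bar> \<partial>M k) \<le> (\<integral>y. w k * g k y \<partial>M k)"
      using F_int g_int dominated by (intro integral_mono_AE) auto
    then show ?thesis
      using d_pos[of k] by (simp add: divide_right_mono)
  qed
  show abs_summable: "summable (\<lambda>k. (\<integral>y. \<bar>F k y\<bar> \<partial>M k) / d k)"
    using abs_int_le d_pos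
    by (intro summable_comparison_test'[OF summable, of 0]) (auto simp: less_imp_le)
  have int_le: "\<bar>(\<integral>y. F k y \<partial>M k) / d k\<bar> \<le> (\<integral>y. \<bar>F k y\<bar> \<partial>M k) / d k" for k
    using d_pos[of k] by (simp add: divide_right_mono)
  have "summable (\<lambda>k. \<bar>(\<integral>y. F k y \<partial>M k) / d k\<bar>)"
    using int_le by (intro summable_comparison_test'[OF abs_summable, of 0]) auto
  then have "\<bar>\<Sum>k. (\<integral>y. F k y \<partial>M k) / d k\<bar> \<le> (\<Sum>k. (\<integral>y. \<bar>F k y\<bar> \<partial>M k) / d k)"
    using int_le abs_summable by (intro order_trans[OF summable_rabs suminf_le]) auto
  also have "\<dots> \<le> (\<Sum>k. w k * (\<integral>y. g k y \<partial>M k) / d k)"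
    using abs_int_le abs_summable summable by (rule suminf_le)
  finally show "\<bar>\<Sum>k. (\<integral>y. F k y \<partial>M k) / d k\<bar> \<le> (\<Sum>k. w k * (\<integral>y. g k y \<partial>M k) / d k)" .
qed

section \<open>Concatenation of tuples\<close>

definition tuple_append :: "nat \<Rightarrow> nat \<Rightarrow> (nat \<Rightarrow> 'a) \<Rightarrow> (nat \<Rightarrow> 'a) \<Rightarrow> nat \<Rightarrow> 'a" where
  "tuple_append n k x y = (\<lambda>i\<in>{..<n + k}. if i < n then x i else y (i - n))"

lemma tuple_append_in_PiE:
  "tuple_append n k x y \<in> Pi\<^sub>E {..<n + k} A \<longleftrightarrow> (\<forall>i<n. x i \<in> A i) \<and> (\<forall>i<k. y i \<in> A (n + i))"
  by (simp add: tuple_append_def PiE_iff Ball_def all_less_add_iff)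

definition tuple_split :: "nat \<Rightarrow> nat \<Rightarrow> (nat \<Rightarrow> 'a) \<Rightarrow> (nat \<Rightarrow> 'a) \<times> (nat \<Rightarrow> 'a)" where
  "tuple_split n k u = (restrict u {..<n}, \<lambda>i\<in>{..<k}. u (n + i))"

lemma tuple_split_append:
  "p \<in> space (PX M n \<Otimes>\<^sub>M PX M k) \<Longrightarrow> tuple_split n k (case_prod (tuple_append n k) p) = p"
  by (auto simp: tuple_split_def tuple_append_def PX_def space_pair_measure space_PiM PiE_iff
      extensional_def fun_eq_iff prod_eq_iff)

abbreviation tuple_tail :: "nat \<Rightarrow> (nat \<Rightarrow> 'a) \<Rightarrow> nat \<Rightarrow> 'a" where
  "tuple_tail n x \<equiv> \<lambda>i\<in>{..<n}. x (Suc i)"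

lemma measurable_PX_component: "i < n \<Longrightarrow> (\<lambda>x. x i) \<in> measurable (PX M n) M"
  unfolding PX_def by simp

lemma measurable_tuple_append:
  "case_prod (tuple_append n k) \<in> measurable (PX M n \<Otimes>\<^sub>M PX M k) (PX M (n + k))"
  unfolding tuple_append_def PX_def case_prod_beta
proof (rule measurable_restrict)
  show "(\<lambda>p. if i < n then fst p i else snd p (i - n)) \<in> PiM {..<n} (\<lambda>_. M) \<Otimes>\<^sub>M PiM {..<k} (\<lambda>_. M) \<rightarrow>\<^sub>M M"
    if "i \<in> {..<n + k}" for i
    using that by (cases "i < n") auto
qed

lemma measurable_tuple_split: "tuple_split n k \<in> measurable (PX M (n + k)) (PX M n \<Otimes>\<^sub>M PX M k)"
  unfolding tuple_split_def PX_def
  by (intro measurable_Pair measurable_restrict) auto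

lemma measurable_tuple_tail: "tuple_tail n \<in> measurable (PX M (Suc n)) (PX M n)"
  unfolding PX_def by (rule measurable_restrict) simp

lemma sigma_finite_PX: "sigma_finite_measure M \<Longrightarrow> sigma_finite_measure (PX M n)"
  unfolding PX_def by (rule product_sigma_finite.sigma_finite) (auto simp: product_sigma_finite_def)

lemma distr_PX_tuple_append:
  assumes "sigma_finite_measure M"
  shows "distr (PX M n \<Otimes>\<^sub>M PX M k) (PX M (n + k)) (case_prod (tuple_append n k)) = PX M (n + k)"
proof -
  interpret product_sigma_finite "\<lambda>_::nat. M"
    using assms by (simp add: product_sigma_finite_def)
  interpret K: sigma_finite_measure "PX M k"
    using assms by (rule sigma_finite_PX)
  show ?thesis
    unfolding PX_def[of M "n + k"]
  proof (rule PiM_eqI)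
    fix A assume A: "\<And>i. i \<in> {..<n + k} \<Longrightarrow> A i \<in> sets M"
    have A_low: "A i \<in> sets M" if "i < n" for i
      using A that by simp
    have A_high: "A (n + i) \<in> sets M" if "i < k" for i
      using A that by simp
    have "case_prod (tuple_append n k) -` Pi\<^sub>E {..<n + k} A \<inter> space (PX M n \<Otimes>\<^sub>M PX M k)
        = Pi\<^sub>E {..<n} A \<times> Pi\<^sub>E {..<k} (\<lambda>i. A (n + i))"
      using A_low[THEN sets.sets_into_space] A_high[THEN sets.sets_into_space]
      by (auto simp: tuple_append_in_PiE PX_def space_pair_measure space_PiM)
         (auto simp: PiE_iff subset_iff)
    moreover have "Pi\<^sub>E {..<n + k} A \<in> sets (PX M (n + k))" "Pi\<^sub>E {..<n} A \<in> sets (PX M n)"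
        "Pi\<^sub>E {..<k} (\<lambda>i. A (n + i)) \<in> sets (PX M k)"
      unfolding PX_def using A A_low A_high by (auto intro!: sets_PiM_I_finite)
    moreover have "emeasure (PX M n) (Pi\<^sub>E {..<n} A) = (\<Prod>i<n. emeasure M (A i))"
      unfolding PX_def using A_low by (subst emeasure_PiM) auto
    moreover have "emeasure (PX M k) (Pi\<^sub>E {..<k} (\<lambda>i. A (n + i))) = (\<Prod>i<k. emeasure M (A (n + i)))"
      unfolding PX_def using A_high by (subst emeasure_PiM) auto
    ultimately show "emeasure (distr (PX M n \<Otimes>\<^sub>M PX M k) (PiM {..<n + k} (\<lambda>_. M))
        (case_prod (tuple_append n k))) (Pi\<^sub>E {..<n + k} A) = (\<Prod>i<n + k. emeasure M (A i))"
      using A measurable_tuple_append[of n k M]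
      by (subst emeasure_distr) (auto simp: PX_def[symmetric] K.emeasure_pair_measure_Times prod_lessThan_add)
  qed (simp_all add: PX_def)
qed

lemma AE_PX_tuple_append:
  assumes "sigma_finite_measure M" and "AE u in PX M (n + k). P u"
  shows "AE x in PX M n. AE y in PX M k. P (tuple_append n k x y)"
proof -
  interpret N: sigma_finite_measure "PX M n" using assms(1) by (rule sigma_finite_PX)
  interpret K: sigma_finite_measure "PX M k" using assms(1) by (rule sigma_finite_PX)
  interpret pair_sigma_finite "PX M n" "PX M k" ..
  have "AE u in distr (PX M n \<Otimes>\<^sub>M PX M k) (PX M (n + k)) (case_prod (tuple_append n k)). P u"
    using assms(2) by (simp only: distr_PX_tuple_append[OF assms(1)])
  then have "AE p in PX M n \<Otimes>\<^sub>M PX M k. P (case_prod (tuple_append n k) p)"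
    by (rule AE_distrD[OF measurable_tuple_append])
  then show ?thesis
    by (auto dest: AE_pair)
qed

lemma AE_PX_split:
  assumes "sigma_finite_measure M" and "AE x in PX M n. P x" and "AE y in PX M k. Q y"
  shows "AE u in PX M (n + k). P (restrict u {..<n}) \<and> Q (\<lambda>i\<in>{..<k}. u (n + i))"
proof -
  interpret N: sigma_finite_measure "PX M n" using assms(1) by (rule sigma_finite_PX)
  interpret K: sigma_finite_measure "PX M k" using assms(1) by (rule sigma_finite_PX)
  interpret pair_sigma_finite "PX M n" "PX M k" ..
  have "AE p in PX M n \<Otimes>\<^sub>M PX M k. P (fst p) \<and> Q (snd p)"
    using assms(2,3) by (rule AE_pair_measure_fst_snd)
  then have "AE u in distr (PX M n \<Otimes>\<^sub>M PX M k) (PX M (n + k)) (case_prod (tuple_append n k)).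
      P (fst (tuple_split n k u)) \<and> Q (snd (tuple_split n k u))"
    by (intro AE_distr_left_inverse[OF measurable_tuple_append measurable_tuple_split] tuple_split_append)
  then show ?thesis
    by (simp only: distr_PX_tuple_append[OF assms(1)]) (simp add: tuple_split_def)
qed

lemma AE_PX_one:
  assumes "sigma_finite_measure M" and "AE x in M. P x"
  shows "AE u in PX M 1. P (u 0)"
proof -
  have "{..<1::nat} = {0}" by auto
  then have PX_one: "PX M 1 = PiM {0} (\<lambda>_. M)" by (simp add: PX_def)
  have distr_one: "distr (PX M 1) M (\<lambda>u. u 0) = M"
    unfolding PX_one using product_sigma_finite.distr_singleton[of "\<lambda>_. M" 0] assms(1)
    by (simp add: product_sigma_finite_def)
  have "AE x in distr (PX M 1) M (\<lambda>u. u 0). P x"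
    unfolding distr_one by (rule assms(2))
  moreover have "(\<lambda>u. u 0) \<in> measurable (PX M 1) M"
    unfolding PX_one by simp
  ultimately show ?thesis
    by (rule AE_distrD[rotated])
qed

section \<open>Mayer function and weights\<close>

lemma mayer_nonpos: "mayer v x y \<le> 0"
  by (auto simp: mayer_def)

lemma mayer_ge_minus_one: "-1 \<le> mayer v x y"
  by (auto simp: mayer_def)

lemma one_plus_mayer_nonneg: "0 \<le> 1 + mayer v x y"
  using mayer_ge_minus_one[of v x y] by simp

lemma one_plus_mayer_le_one: "1 + mayer v x y \<le> 1"
  using mayer_nonpos[of v x y] by simp

lemma weight_nonneg: "(\<And>x. 0 \<le> z x) \<Longrightarrow> 0 \<le> weight v z a t n x"
  unfolding weight_def by (intro mult_nonneg_nonneg prod_nonneg) (auto intro: one_plus_mayer_nonneg)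

lemma weight_cong: "(\<And>i. i < n \<Longrightarrow> x i = y i) \<Longrightarrow> weight v z a t n x = weight v z a t n y"
  unfolding weight_def by (intro arg_cong2[where f = "(*)"] prod.cong) auto

lemma weight_tuple_append_le:
  assumes z_nonneg: "\<And>x. 0 \<le> z x"
  shows "weight v z a t (n + k) (tuple_append n k x y) \<le> weight v z a t n x * weight v z a t k y"
proof -
  let ?h = "\<lambda>p q. 1 + mayer v p q" and ?u = "tuple_append n k x y"
  have u_low: "?u i = x i" if "i < n" for i
    using that by (simp add: tuple_append_def)
  have u_high: "?u (n + j) = y j" if "j < k" for j
    using that by (simp add: tuple_append_def)
  define Px Py Pxy Zx Zy where
    "Px = (\<Prod>j<n. \<Prod>i<j. ?h (x i) (x j))" and "Py = (\<Prod>j<k. \<Prod>i<j. ?h (y i) (y j))"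
    and "Pxy = (\<Prod>j<k. \<Prod>i<n. ?h (x i) (y j))"
    and "Zx = (\<Prod>i<n. z (x i) * exp (a (x i)))" and "Zy = (\<Prod>j<k. z (y j) * exp (a (y j)))"
  have "(\<Prod>j<n + k. \<Prod>i<j. ?h (?u i) (?u j)) = Px * Pxy * Py"
    unfolding prod_triangle_lessThan_add Px_def Pxy_def Py_def
    by (intro arg_cong2[where f = "(*)"] prod.cong) (auto simp: u_low u_high)
  moreover have "(\<Prod>i<n + k. z (?u i) * exp (a (?u i))) = Zx * Zy"
    unfolding prod_lessThan_add Zx_def Zy_def
    by (intro arg_cong2[where f = "(*)"] prod.cong) (auto simp: u_low u_high)
  moreover have "Px * Pxy * Py \<le> Px * Py"
  proof -
    have "0 \<le> Px" "0 \<le> Py" "Pxy \<le> 1"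
      unfolding Px_def Py_def Pxy_def
      by (auto intro!: prod_nonneg prod_le_1 one_plus_mayer_nonneg one_plus_mayer_le_one)
    then show ?thesis
      by (metis mult.right_neutral mult_left_le mult_right_mono mult.commute mult.left_commute)
  qed
  moreover have "0 \<le> Zx * Zy"
    unfolding Zx_def Zy_def by (auto intro!: prod_nonneg mult_nonneg_nonneg z_nonneg)
  ultimately have "weight v z a t (n + k) ?u \<le> exp (t * real n) * exp (t * real k) * (Px * Py) * (Zx * Zy)"
    unfolding weight_def by (simp add: distrib_left exp_add mult_right_mono)
  also have "\<dots> = weight v z a t n x * weight v z a t k y"
    unfolding weight_def Px_def Py_def Zx_def Zy_def by (simp add: ac_simps)
  finally show ?thesis .
qed

lemma weight_Suc:
  "weight v z a t (Suc n) x = exp t * (z (x 0) * exp (a (x 0))) *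
     (\<Prod>i\<in>{1..n}. 1 + mayer v (x 0) (x i)) * weight v z a t n (\<lambda>i. x (Suc i))"
proof -
  have "(\<Prod>i\<in>{1..n}. 1 + mayer v (x 0) (x i)) = (\<Prod>j<n. 1 + mayer v (x 0) (x (Suc j)))"
    by (rule prod.reindex_bij_witness[where i = Suc and j = "\<lambda>i. i - 1"]) auto
  then show ?thesis
    unfolding weight_def prod.lessThan_Suc_shift
    by (simp add: prod.distrib exp_add[symmetric] distrib_left ac_simps del: prod.lessThan_Suc)
qed

definition kp_integrand :: "('a \<Rightarrow> 'a \<Rightarrow> ennreal) \<Rightarrow> ('a \<Rightarrow> real) \<Rightarrow> ('a \<Rightarrow> real) \<Rightarrow> nat
    \<Rightarrow> 'a \<Rightarrow> (nat \<Rightarrow> 'a) \<Rightarrow> real" where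
  "kp_integrand v z a k x0 y = (\<Prod>j<k. \<bar>mayer v x0 (y j)\<bar>) *
     (\<Prod>j<k. \<Prod>i<j. 1 + mayer v (y i) (y j)) * (\<Prod>j<k. z (y j) * exp (a (y j)))"

lemma kp_integrand_nonneg: "(\<And>x. 0 \<le> z x) \<Longrightarrow> 0 \<le> kp_integrand v z a k x0 y"
  unfolding kp_integrand_def
  by (intro mult_nonneg_nonneg prod_nonneg) (auto intro: one_plus_mayer_nonneg)

definition weight_bounded :: "'a measure \<Rightarrow> ('a \<Rightarrow> 'a \<Rightarrow> ennreal) \<Rightarrow> ('a \<Rightarrow> real) \<Rightarrow> ('a \<Rightarrow> real)
    \<Rightarrow> real \<Rightarrow> (nat \<Rightarrow> (nat \<Rightarrow> 'a) \<Rightarrow> real) \<Rightarrow> real \<Rightarrow> bool" where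
  "weight_bounded lam v z a t \<rho> C \<longleftrightarrow>
     0 \<le> C \<and> (\<forall>n\<ge>1. AE x in PX lam n. \<bar>\<rho> n x\<bar> \<le> C * weight v z a t n x)"

lemma E0_iff_weight_bounded:
  "\<rho> \<in> E0 lam v z a t \<longleftrightarrow>
     (\<forall>n\<ge>1. \<rho> n \<in> borel_measurable (PX lam n)) \<and> (\<exists>C. weight_bounded lam v z a t \<rho> C)"
  unfolding E0_def weight_bounded_def by auto

lemma norm0_eq_Inf_weight_bounded: "norm0 lam v z a t \<rho> = Inf {C. weight_bounded lam v z a t \<rho> C}"
  unfolding norm0_def weight_bounded_def ..

lemma norm0_le_scaled:
  assumes bounded: "weight_bounded lam v z a t \<rho> C0" and q: "0 < q"
    and scaled: "\<And>C. weight_bounded lam v z a t \<rho> C \<Longrightarrow> weight_bounded lam v z a t \<sigma> (q * C)"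
  shows "norm0 lam v z a t \<sigma> \<le> q * norm0 lam v z a t \<rho>"
proof -
  have "norm0 lam v z a t \<sigma> / q \<le> norm0 lam v z a t \<rho>"
    unfolding norm0_eq_Inf_weight_bounded[of lam v z a t \<rho>]
  proof (rule cInf_greatest)
    show "{C. weight_bounded lam v z a t \<rho> C} \<noteq> {}"
      using bounded by blast
    fix C assume "C \<in> {C. weight_bounded lam v z a t \<rho> C}"
    then have "norm0 lam v z a t \<sigma> \<le> q * C"
      unfolding norm0_eq_Inf_weight_bounded using scaled
      by (intro cInf_lower) (auto intro: bdd_belowI[of _ 0] simp: weight_bounded_def)
    then show "norm0 lam v z a t \<sigma> / q \<le> C"
      using q by (simp add: divide_simps mult.commute)
  qed
  then show ?thesis
    using q by (simp add: divide_simps mult.commute)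
qed

section \<open>The operator \<open>K\<^sub>z\<close>\<close>

lemma Kint_eq_tuple_append:
  "Kint v \<rho> n x k y = (\<Prod>j<k. mayer v (x 0) (y j)) * \<rho> (n + k) (tuple_append n k (tuple_tail n x) y)"
proof -
  have "(\<lambda>i\<in>{..<n + k}. if i < n then x (Suc i) else y (i - n)) = tuple_append n k (tuple_tail n x) y"
    by (auto simp: tuple_append_def fun_eq_iff)
  then show ?thesis
    unfolding Kint_def by simp
qed

lemma Kint_abs_le:
  assumes z_nonneg: "\<And>x. 0 \<le> z x" and C: "0 \<le> C"
    and bound: "\<bar>\<rho> (n + k) (tuple_append n k (tuple_tail n x) y)\<bar> \<le>
      C * weight v z a t (n + k) (tuple_append n k (tuple_tail n x) y)"
  shows "\<bar>Kint v \<rho> n x k y\<bar> \<le>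
    C * weight v z a t n (tuple_tail n x) * exp (t * real k) * kp_integrand v z a k (x 0) y"
proof -
  define F where "F = (\<Prod>j<k. \<bar>mayer v (x 0) (y j)\<bar>)"
  have F: "0 \<le> F"
    unfolding F_def by (simp add: prod_nonneg)
  have "\<bar>Kint v \<rho> n x k y\<bar> = F * \<bar>\<rho> (n + k) (tuple_append n k (tuple_tail n x) y)\<bar>"
    unfolding Kint_eq_tuple_append F_def by (simp add: abs_mult abs_prod)
  also have "\<dots> \<le> F * (C * (weight v z a t n (tuple_tail n x) * weight v z a t k y))"
  proof -
    have "weight v z a t (n + k) (tuple_append n k (tuple_tail n x) y) \<le>
        weight v z a t n (tuple_tail n x) * weight v z a t k y"
      by (rule weight_tuple_append_le[OF z_nonneg])
    then show ?thesis
      using bound F C by (intro mult_left_mono) (auto intro: order_trans mult_left_mono)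
  qed
  also have "\<dots> = C * weight v z a t n (tuple_tail n x) * exp (t * real k) * kp_integrand v z a k (x 0) y"
    unfolding F_def kp_integrand_def weight_def by (simp add: ac_simps)
  finally show ?thesis .
qed

lemma Kop_linear_at:
  assumes "\<And>k. integrable (PX lam (Suc k)) (Kint v \<rho> n x (Suc k))"
    and "summable (\<lambda>k. (\<integral>y. \<bar>Kint v \<rho> n x (Suc k) y\<bar> \<partial>PX lam (Suc k)) / fact (Suc k))"
    and "\<And>k. integrable (PX lam (Suc k)) (Kint v \<sigma> n x (Suc k))"
    and "summable (\<lambda>k. (\<integral>y. \<bar>Kint v \<sigma> n x (Suc k) y\<bar> \<partial>PX lam (Suc k)) / fact (Suc k))"
  shows "Kop lam v z (\<lambda>m y. c * \<rho> m y + \<sigma> m y) (Suc n) x =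
    c * Kop lam v z \<rho> (Suc n) x + Kop lam v z \<sigma> (Suc n) x"
proof -
  define I where "I r k = (\<integral>y. Kint v r n x (Suc k) y \<partial>PX lam (Suc k)) / fact (Suc k)" for r k
  have summable_I: "summable (I r)"
    if "summable (\<lambda>k. (\<integral>y. \<bar>Kint v r n x (Suc k) y\<bar> \<partial>PX lam (Suc k)) / fact (Suc k))" for r
    unfolding I_def by (rule summable_comparison_test'[OF that, of 0]) (simp add: divide_right_mono)
  have "Kint v (\<lambda>m y. c * \<rho> m y + \<sigma> m y) n x k = (\<lambda>y. c * Kint v \<rho> n x k y + Kint v \<sigma> n x k y)" for k
    unfolding Kint_def by (simp add: fun_eq_iff algebra_simps)
  then have "I (\<lambda>m y. c * \<rho> m y + \<sigma> m y) k = c * I \<rho> k + I \<sigma> k" for k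
    using assms(1,3) by (simp add: I_def add_divide_distrib)
  moreover have "(\<Sum>k. c * I \<rho> k + I \<sigma> k) = c * (\<Sum>k. I \<rho> k) + (\<Sum>k. I \<sigma> k)"
    using summable_I[OF assms(2)] summable_I[OF assms(4)]
    by (simp add: suminf_add[symmetric] suminf_mult summable_mult)
  ultimately show ?thesis
    unfolding Kop_def nat.case I_def by (simp add: algebra_simps)
qed

locale kotecky_preiss =
  fixes lam :: "'a measure" and v :: "'a \<Rightarrow> 'a \<Rightarrow> ennreal" and z a :: "'a \<Rightarrow> real" and t :: real
  assumes sigma_finite_lam: "sigma_finite_measure lam"
    and v_meas: "case_prod v \<in> borel_measurable (lam \<Otimes>\<^sub>M lam)"
    and z_meas: "z \<in> borel_measurable lam" and z_nonneg: "\<And>x. 0 \<le> z x"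
    and a_meas: "a \<in> borel_measurable lam" and a_nonneg: "\<And>x. 0 \<le> a x"
    and kp_condition: "AE x0 in lam.
      (\<Sum>k. ennreal (exp (t * real (Suc k)) / fact (Suc k)) *
        (\<integral>\<^sup>+y. ennreal (kp_integrand v z a (Suc k) x0 y) \<partial>PX lam (Suc k)))
      \<le> ennreal (exp (a x0) - 1)"
begin

lemma measurable_mayer:
  assumes "f \<in> measurable N lam" and "g \<in> measurable N lam"
  shows "(\<lambda>w. mayer v (f w) (g w)) \<in> borel_measurable N"
proof -
  have [measurable]: "(\<lambda>p. v (fst p) (snd p)) \<in> borel_measurable (lam \<Otimes>\<^sub>M lam)"
    using v_meas by (simp add: case_prod_beta')
  have "(\<lambda>p. mayer v (fst p) (snd p)) \<in> borel_measurable (lam \<Otimes>\<^sub>M lam)"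
    unfolding mayer_def by measurable
  from measurable_compose[OF measurable_Pair[OF assms] this] show ?thesis
    by simp
qed

lemma measurable_z_exp_a:
  assumes [measurable]: "f \<in> measurable N lam"
  shows "(\<lambda>w. z (f w) * exp (a (f w))) \<in> borel_measurable N"
  using z_meas a_meas by measurable

lemma measurable_kp_integrand:
  assumes "x0 \<in> space lam"
  shows "kp_integrand v z a k x0 \<in> borel_measurable (PX lam k)"
proof -
  have "(\<lambda>y. x0) \<in> measurable (PX lam k) lam"
    using assms by simp
  then show ?thesis
    unfolding kp_integrand_def
    by (intro borel_measurable_times borel_measurable_prod borel_measurable_abs borel_measurable_add
        borel_measurable_const measurable_mayer measurable_z_exp_a measurable_PX_component) auto
qed

lemma measurable_Kint:
  assumes "\<rho> (n + k) \<in> borel_measurable (PX lam (n + k))"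
  shows "(\<lambda>p. Kint v \<rho> n (fst p) k (snd p)) \<in> borel_measurable (PX lam (Suc n) \<Otimes>\<^sub>M PX lam k)"
proof -
  have "(\<lambda>p. (tuple_tail n (fst p), snd p)) \<in> measurable (PX lam (Suc n) \<Otimes>\<^sub>M PX lam k) (PX lam n \<Otimes>\<^sub>M PX lam k)"
    by (intro measurable_Pair measurable_compose[OF measurable_fst measurable_tuple_tail] measurable_snd)
  from measurable_compose[OF measurable_compose[OF this measurable_tuple_append] assms]
  have "(\<lambda>p. \<rho> (n + k) (tuple_append n k (tuple_tail n (fst p)) (snd p)))
      \<in> borel_measurable (PX lam (Suc n) \<Otimes>\<^sub>M PX lam k)"
    by simp
  moreover have "(\<lambda>p. \<Prod>j<k. mayer v (fst p 0) (snd p j)) \<in> borel_measurable (PX lam (Suc n) \<Otimes>\<^sub>M PX lam k)"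
    by (intro borel_measurable_prod measurable_mayer measurable_compose[OF measurable_fst measurable_PX_component]
        measurable_compose[OF measurable_snd measurable_PX_component]) auto
  ultimately show ?thesis
    unfolding Kint_eq_tuple_append by (rule borel_measurable_times[rotated])
qed

lemma measurable_Kop:
  assumes \<rho>_meas: "\<forall>m\<ge>1. \<rho> m \<in> borel_measurable (PX lam m)"
  shows "Kop lam v z \<rho> (Suc n) \<in> borel_measurable (PX lam (Suc n))"
proof -
  have "(\<lambda>x. \<integral>y. Kint v \<rho> n x (Suc k) y \<partial>PX lam (Suc k)) \<in> borel_measurable (PX lam (Suc n))" for k
  proof -
    interpret sigma_finite_measure "PX lam (Suc k)"
      using sigma_finite_lam by (rule sigma_finite_PX)
    show ?thesis
      using measurable_Kint[of \<rho> n "Suc k"] \<rho>_meas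
      by (intro borel_measurable_lebesgue_integral) (simp add: case_prod_beta')
  qed
  then have series: "(\<lambda>x. \<Sum>k. (\<integral>y. Kint v \<rho> n x (Suc k) y \<partial>PX lam (Suc k)) / fact (Suc k))
      \<in> borel_measurable (PX lam (Suc n))"
    by (intro borel_measurable_suminf borel_measurable_divide borel_measurable_const)
  have first_term: "(\<lambda>x. if n = 0 then 0 else \<rho> n (tuple_tail n x)) \<in> borel_measurable (PX lam (Suc n))"
    using measurable_compose[OF measurable_tuple_tail \<rho>_meas[rule_format, of n]] by (cases "n = 0") simp_all
  have prefactor: "(\<lambda>x. z (x 0) * (\<Prod>i\<in>{1..n}. 1 + mayer v (x 0) (x i))) \<in> borel_measurable (PX lam (Suc n))"
    by (intro borel_measurable_times borel_measurable_prod borel_measurable_add borel_measurable_const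
        measurable_mayer measurable_PX_component measurable_compose[OF _ z_meas]) auto
  show ?thesis
    unfolding Kop_def[abs_def] nat.case
    by (rule borel_measurable_times[OF prefactor borel_measurable_add[OF first_term series]])
qed

lemma measurable_Kint_section:
  assumes "\<rho> (n + k) \<in> borel_measurable (PX lam (n + k))" and "x \<in> space (PX lam (Suc n))"
  shows "Kint v \<rho> n x k \<in> borel_measurable (PX lam k)"
  using measurable_Pair2[OF measurable_Kint[of \<rho> n k, OF assms(1)] assms(2)] by simp

lemma Kint_series_bound_at:
  assumes \<rho>_meas: "\<forall>m\<ge>1. \<rho> m \<in> borel_measurable (PX lam m)"
    and C: "0 \<le> C" and x: "x \<in> space (PX lam (Suc n))"
    and kp_at: "(\<Sum>k. ennreal (exp (t * real (Suc k)) / fact (Suc k)) *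
        (\<integral>\<^sup>+y. ennreal (kp_integrand v z a (Suc k) (x 0) y) \<partial>PX lam (Suc k)))
      \<le> ennreal (exp (a (x 0)) - 1)"
    and bound_append: "\<And>k. AE y in PX lam (Suc k).
      \<bar>\<rho> (n + Suc k) (tuple_append n (Suc k) (tuple_tail n x) y)\<bar>
        \<le> C * weight v z a t (n + Suc k) (tuple_append n (Suc k) (tuple_tail n x) y)"
  shows "integrable (PX lam (Suc k)) (Kint v \<rho> n x (Suc k))"
    and "summable (\<lambda>k. (\<integral>y. \<bar>Kint v \<rho> n x (Suc k) y\<bar> \<partial>PX lam (Suc k)) / fact (Suc k))"
    and "\<bar>\<Sum>k. (\<integral>y. Kint v \<rho> n x (Suc k) y \<partial>PX lam (Suc k)) / fact (Suc k)\<bar>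
      \<le> C * weight v z a t n (tuple_tail n x) * (exp (a (x 0)) - 1)"
proof -
  define W where "W = weight v z a t n (tuple_tail n x)"
  define c where "c k = exp (t * real (Suc k)) / fact (Suc k)" for k
  define g where "g k = kp_integrand v z a (Suc k) (x 0)" for k
  have W: "0 \<le> W"
    unfolding W_def by (rule weight_nonneg[OF z_nonneg])
  have x0: "x 0 \<in> space lam"
    using measurable_space[OF measurable_PX_component x] by simp
  have g_meas: "g k \<in> borel_measurable (PX lam (Suc k))" for k
    unfolding g_def by (rule measurable_kp_integrand[OF x0])
  have g_nonneg: "0 \<le> g k y" for k y
    unfolding g_def by (rule kp_integrand_nonneg[OF z_nonneg])
  have c_pos: "0 < c k" for k
    unfolding c_def by simp
  have "0 \<le> exp (a (x 0)) - 1"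
    using a_nonneg[of "x 0"] by simp
  note kp_series = real_series_of_nn_integral_series_le[OF g_meas g_nonneg c_pos this
      kp_at[folded c_def g_def]]
  have Kint_meas: "Kint v \<rho> n x (Suc k) \<in> borel_measurable (PX lam (Suc k))" for k
    using \<rho>_meas by (intro measurable_Kint_section x) simp
  have dominated: "AE y in PX lam (Suc k).
      \<bar>Kint v \<rho> n x (Suc k) y\<bar> \<le> C * W * exp (t * real (Suc k)) * g k y" for k
    using bound_append[of k] by eventually_elim (unfold W_def g_def, rule Kint_abs_le[OF z_nonneg C])
  have weights: "C * W * exp (t * real (Suc k)) * (\<integral>y. g k y \<partial>PX lam (Suc k)) / fact (Suc k)
      = C * W * (c k * (\<integral>y. g k y \<partial>PX lam (Suc k)))" for k
    by (simp add: c_def)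
  note Kint_series = dominated_integral_series[where M = "\<lambda>k. PX lam (Suc k)"
      and F = "\<lambda>k. Kint v \<rho> n x (Suc k)" and g = g and d = "\<lambda>k. fact (Suc k)",
      OF Kint_meas kp_series(1) dominated, unfolded weights]
  show "integrable (PX lam (Suc k)) (Kint v \<rho> n x (Suc k))" for k
    using Kint_series(1) kp_series(1) kp_series(2) by (simp add: g_def summable_mult)
  show "summable (\<lambda>k. (\<integral>y. \<bar>Kint v \<rho> n x (Suc k) y\<bar> \<partial>PX lam (Suc k)) / fact (Suc k))"
    using Kint_series(2) kp_series(1) kp_series(2) by (simp add: g_def summable_mult)
  have "\<bar>\<Sum>k. (\<integral>y. Kint v \<rho> n x (Suc k) y \<partial>PX lam (Suc k)) / fact (Suc k)\<bar>
      \<le> C * W * (\<Sum>k. c k * (\<integral>y. g k y \<partial>PX lam (Suc k)))"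
    using Kint_series(3) kp_series(1) kp_series(2) by (simp add: g_def summable_mult suminf_mult)
  also have "\<dots> \<le> C * W * (exp (a (x 0)) - 1)"
    using kp_series(3) C W by (simp add: mult_left_mono)
  finally show "\<bar>\<Sum>k. (\<integral>y. Kint v \<rho> n x (Suc k) y \<partial>PX lam (Suc k)) / fact (Suc k)\<bar>
      \<le> C * weight v z a t n (tuple_tail n x) * (exp (a (x 0)) - 1)"
    unfolding W_def .
qed

lemma Kop_abs_le_at:
  assumes C: "0 \<le> C"
    and bound_tail: "n \<ge> 1 \<Longrightarrow> \<bar>\<rho> n (tuple_tail n x)\<bar> \<le> C * weight v z a t n (tuple_tail n x)"
    and series_le: "\<bar>\<Sum>k. (\<integral>y. Kint v \<rho> n x (Suc k) y \<partial>PX lam (Suc k)) / fact (Suc k)\<bar>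
      \<le> C * weight v z a t n (tuple_tail n x) * (exp (a (x 0)) - 1)"
  shows "\<bar>Kop lam v z \<rho> (Suc n) x\<bar> \<le> exp (- t) * C * weight v z a t (Suc n) x"
proof -
  define W where "W = weight v z a t n (tuple_tail n x)"
  have W: "0 \<le> W"
    unfolding W_def by (rule weight_nonneg[OF z_nonneg])
  have first_le: "\<bar>if n = 0 then 0 else \<rho> n (tuple_tail n x)\<bar> \<le> C * W"
    using bound_tail C W by (auto simp: W_def)
  define P where "P = z (x 0) * (\<Prod>i\<in>{1..n}. 1 + mayer v (x 0) (x i))"
  have P: "0 \<le> P"
    unfolding P_def by (intro mult_nonneg_nonneg prod_nonneg z_nonneg) (auto intro: one_plus_mayer_nonneg)
  have "\<bar>Kop lam v z \<rho> (Suc n) x\<bar> \<le> P * (C * W + C * W * (exp (a (x 0)) - 1))"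
    unfolding Kop_def nat.case P_def[symmetric] abs_mult abs_of_nonneg[OF P]
    using first_le series_le[folded W_def] P by (intro mult_left_mono order_trans[OF abs_triangle_ineq] add_mono)
  also have "\<dots> = exp (- t) * C * weight v z a t (Suc n) x"
  proof -
    have "weight v z a t n (\<lambda>i. x (Suc i)) = W"
      unfolding W_def by (rule weight_cong) simp
    then show ?thesis
      unfolding weight_Suc P_def by (simp add: algebra_simps exp_minus field_simps)
  qed
  finally show "\<bar>Kop lam v z \<rho> (Suc n) x\<bar> \<le> exp (- t) * C * weight v z a t (Suc n) x" .
qed

lemma Kop_abs_le_AE:
  assumes \<rho>_meas: "\<forall>m\<ge>1. \<rho> m \<in> borel_measurable (PX lam m)"
    and bounded: "weight_bounded lam v z a t \<rho> C"
  shows "AE x in PX lam (Suc n).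
    (\<forall>k. integrable (PX lam (Suc k)) (Kint v \<rho> n x (Suc k))) \<and>
    summable (\<lambda>k. (\<integral>y. \<bar>Kint v \<rho> n x (Suc k) y\<bar> \<partial>PX lam (Suc k)) / fact (Suc k)) \<and>
    \<bar>Kop lam v z \<rho> (Suc n) x\<bar> \<le> exp (- t) * C * weight v z a t (Suc n) x"
proof -
  have C: "0 \<le> C" and bound: "\<And>m. m \<ge> 1 \<Longrightarrow> AE x in PX lam m. \<bar>\<rho> m x\<bar> \<le> C * weight v z a t m x"
    using bounded by (auto simp: weight_bounded_def)
  let ?kp = "\<lambda>x0. (\<Sum>k. ennreal (exp (t * real (Suc k)) / fact (Suc k)) *
    (\<integral>\<^sup>+y. ennreal (kp_integrand v z a (Suc k) x0 y) \<partial>PX lam (Suc k))) \<le> ennreal (exp (a x0) - 1)"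
  let ?good_tail = "\<lambda>x'. (n \<ge> 1 \<longrightarrow> \<bar>\<rho> n x'\<bar> \<le> C * weight v z a t n x') \<and>
    (\<forall>k. AE y in PX lam (Suc k). \<bar>\<rho> (n + Suc k) (tuple_append n (Suc k) x' y)\<bar>
       \<le> C * weight v z a t (n + Suc k) (tuple_append n (Suc k) x' y))"
  have "AE u in PX lam 1. ?kp (u 0)"
    using sigma_finite_lam kp_condition by (rule AE_PX_one)
  moreover have "AE x' in PX lam n. ?good_tail x'"
  proof -
    have "AE x' in PX lam n. n \<ge> 1 \<longrightarrow> \<bar>\<rho> n x'\<bar> \<le> C * weight v z a t n x'"
      using bound[of n] by (cases "n \<ge> 1") simp_all
    moreover have "AE x' in PX lam n. \<forall>k. AE y in PX lam (Suc k).
        \<bar>\<rho> (n + Suc k) (tuple_append n (Suc k) x' y)\<bar>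
          \<le> C * weight v z a t (n + Suc k) (tuple_append n (Suc k) x' y)"
      unfolding AE_all_countable by (intro allI AE_PX_tuple_append[OF sigma_finite_lam bound]) simp
    ultimately show ?thesis
      by eventually_elim simp
  qed
  ultimately have "AE x in PX lam (1 + n). ?kp (restrict x {..<1} 0) \<and> ?good_tail (\<lambda>i\<in>{..<n}. x (1 + i))"
    by (rule AE_PX_split[OF sigma_finite_lam])
  then have "AE x in PX lam (Suc n). ?kp (x 0) \<and> ?good_tail (tuple_tail n x)"
    by (simp only: Suc_eq_plus1_left) simp
  then show ?thesis
  proof (rule AE_mp, intro AE_I2 impI)
    fix x assume x: "x \<in> space (PX lam (Suc n))" and "?kp (x 0) \<and> ?good_tail (tuple_tail n x)"
    then have kp: "?kp (x 0)" and tail: "n \<ge> 1 \<Longrightarrow> \<bar>\<rho> n (tuple_tail n x)\<bar> \<le> C * weight v z a t n (tuple_tail n x)"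
      and append: "\<And>k. AE y in PX lam (Suc k).
        \<bar>\<rho> (n + Suc k) (tuple_append n (Suc k) (tuple_tail n x) y)\<bar>
          \<le> C * weight v z a t (n + Suc k) (tuple_append n (Suc k) (tuple_tail n x) y)"
      by simp_all
    note series = Kint_series_bound_at[OF \<rho>_meas C x kp append]
    show "(\<forall>k. integrable (PX lam (Suc k)) (Kint v \<rho> n x (Suc k))) \<and>
      summable (\<lambda>k. (\<integral>y. \<bar>Kint v \<rho> n x (Suc k) y\<bar> \<partial>PX lam (Suc k)) / fact (Suc k)) \<and>
      \<bar>Kop lam v z \<rho> (Suc n) x\<bar> \<le> exp (- t) * C * weight v z a t (Suc n) x"
      using series Kop_abs_le_at[OF C tail series(3)] by simp
  qed
qed

lemma Kop_weight_bounded: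
  assumes "\<forall>m\<ge>1. \<rho> m \<in> borel_measurable (PX lam m)"
    and "weight_bounded lam v z a t \<rho> C"
  shows "weight_bounded lam v z a t (Kop lam v z \<rho>) (exp (- t) * C)"
  unfolding weight_bounded_def
proof (intro conjI allI impI)
  show "0 \<le> exp (- t) * C"
    using assms(2) by (simp add: weight_bounded_def)
  fix m :: nat assume "m \<ge> 1"
  then obtain n where m: "m = Suc n"
    by (cases m) auto
  show "AE x in PX lam m. \<bar>Kop lam v z \<rho> m x\<bar> \<le> exp (- t) * C * weight v z a t m x"
    using Kop_abs_le_AE[where n = n, OF assms] unfolding m by eventually_elim simp
qed

lemma Kop_mem_E0:
  assumes "\<rho> \<in> E0 lam v z a t"
  shows "Kop lam v z \<rho> \<in> E0 lam v z a t"
proof -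
  have \<rho>_meas: "\<forall>m\<ge>1. \<rho> m \<in> borel_measurable (PX lam m)"
    and "\<exists>C. weight_bounded lam v z a t \<rho> C"
    using assms by (simp_all add: E0_iff_weight_bounded)
  moreover have "Kop lam v z \<rho> m \<in> borel_measurable (PX lam m)" if "m \<ge> 1" for m
    using that measurable_Kop[OF \<rho>_meas] by (cases m) auto
  ultimately show ?thesis
    unfolding E0_iff_weight_bounded by (blast intro: Kop_weight_bounded)
qed

lemma norm0_Kop_le:
  assumes "\<rho> \<in> E0 lam v z a t"
  shows "norm0 lam v z a t (Kop lam v z \<rho>) \<le> exp (- t) * norm0 lam v z a t \<rho>"
proof -
  obtain C where bounded: "weight_bounded lam v z a t \<rho> C"
    and \<rho>_meas: "\<forall>m\<ge>1. \<rho> m \<in> borel_measurable (PX lam m)"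
    using assms by (auto simp: E0_iff_weight_bounded)
  from norm0_le_scaled[OF bounded _ Kop_weight_bounded[OF \<rho>_meas]] show ?thesis
    by simp
qed

lemma Kop_series_integrable_AE:
  assumes "\<rho> \<in> E0 lam v z a t"
  shows "AE x in PX lam (Suc n).
    (\<forall>k. integrable (PX lam (Suc k)) (Kint v \<rho> n x (Suc k))) \<and>
    summable (\<lambda>k. (\<integral>y. \<bar>Kint v \<rho> n x (Suc k) y\<bar> \<partial>PX lam (Suc k)) / fact (Suc k))"
proof -
  obtain C where bounded: "weight_bounded lam v z a t \<rho> C"
    and \<rho>_meas: "\<forall>m\<ge>1. \<rho> m \<in> borel_measurable (PX lam m)"
    using assms by (auto simp: E0_iff_weight_bounded)
  from Kop_abs_le_AE[where n = n, OF \<rho>_meas bounded] show ?thesis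
    by eventually_elim simp
qed

lemma Kop_linear_AE:
  assumes "\<rho> \<in> E0 lam v z a t" and "\<sigma> \<in> E0 lam v z a t" and "m \<ge> 1"
  shows "AE x in PX lam m.
    Kop lam v z (\<lambda>m y. c * \<rho> m y + \<sigma> m y) m x = c * Kop lam v z \<rho> m x + Kop lam v z \<sigma> m x"
proof -
  obtain n where m: "m = Suc n"
    using assms(3) by (cases m) auto
  show ?thesis
    using Kop_series_integrable_AE[OF assms(1), of n] Kop_series_integrable_AE[OF assms(2), of n]
    unfolding m by eventually_elim (rule Kop_linear_at; blast)
qed

end

theorem mainTheorem14:
  fixes lam :: "('a::polish_space) measure"
    and v :: "'a \<Rightarrow> 'a \<Rightarrow> ennreal"
    and z a :: "'a \<Rightarrow> real"
    and t :: real
  assumes sets_lam: "sets lam = sets borel"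
    and lam_fin: "\<And>B. B \<in> sets borel \<Longrightarrow> bounded B \<Longrightarrow> emeasure lam B < \<infinity>"
    and v_meas: "case_prod v \<in> borel_measurable (lam \<Otimes>\<^sub>M lam)"
    and v_sym: "\<And>x y. v x y = v y x"
    and z_meas: "z \<in> borel_measurable lam"
    and z_nonneg: "\<And>x. 0 \<le> z x"
    and z_loc: "\<And>B. B \<in> sets borel \<Longrightarrow> bounded B \<Longrightarrow> (\<integral>\<^sup>+x\<in>B. ennreal (z x) \<partial>lam) < \<infinity>"
    and f_nonpos: "AE p in lam \<Otimes>\<^sub>M lam. mayer v (fst p) (snd p) \<le> 0"
    and a_meas: "a \<in> borel_measurable lam"
    and a_nonneg: "\<And>x. 0 \<le> a x"
    and t_pos: "0 < t"
    and KP: "AE x0 in lam.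
      (\<Sum>k. ennreal (exp (t * real (Suc k)) / fact (Suc k)) *
        (\<integral>\<^sup>+y. ennreal ((\<Prod>j<Suc k. \<bar>mayer v x0 (y j)\<bar>) *
                 (\<Prod>j<Suc k. \<Prod>i<j. 1 + mayer v (y i) (y j)) *
                 (\<Prod>j<Suc k. z (y j) * exp (a (y j)))) \<partial>PX lam (Suc k)))
      \<le> ennreal (exp (a x0) - 1)"
  shows "(\<forall>\<rho>\<in>E0 lam v z a t.
            (\<forall>n. AE x in PX lam (Suc n).
                 (\<forall>k. integrable (PX lam (Suc k)) (Kint v \<rho> n x (Suc k))) \<and>
                 summable (\<lambda>k. (\<integral>y. \<bar>Kint v \<rho> n x (Suc k) y\<bar> \<partial>PX lam (Suc k)) / fact (Suc k)))
          \<and> Kop lam v z \<rho> \<in> E0 lam v z a t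
          \<and> norm0 lam v z a t (Kop lam v z \<rho>) \<le> exp (- t) * norm0 lam v z a t \<rho>)
       \<and> (\<forall>\<rho>\<in>E0 lam v z a t. \<forall>\<sigma>\<in>E0 lam v z a t. \<forall>c::real. \<forall>n\<ge>1.
            AE x in PX lam n.
              Kop lam v z (\<lambda>m y. c * \<rho> m y + \<sigma> m y) n x = c * Kop lam v z \<rho> n x + Kop lam v z \<sigma> n x)
       \<and> exp (- t) < 1"
proof -
  have "kotecky_preiss lam v z a t"
    using KP unfolding kp_integrand_def[symmetric]
    by (intro kotecky_preiss.intro sigma_finite_if_finite_on_bounded[OF sets_lam lam_fin]
        v_meas z_meas z_nonneg a_meas a_nonneg)
  then interpret kotecky_preiss lam v z a t .
  show ?thesis
  proof (intro conjI ballI allI impI)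
    show "exp (- t) < 1"
      using t_pos by simp
  qed (rule Kop_series_integrable_AE Kop_mem_E0 norm0_Kop_le Kop_linear_AE; assumption)+
qed

end
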